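(* For every integer $n\ge2$ and every integer $s\ge0$ with $2^s\le n$, the polynomial $1+x^{2^s}$ does not divide $\operatorname{num}_{\mathcal B}(n,x)$ in $\mathbb{Z}[x]$. Consequently, for every $n\ge1$, $\gcd(\operatorname{num}_{\mathcal B}(n,x),\operatorname{den}_{\mathcal B}(n,x))=1$.
   Context: A binary partition of $n$ is a partition of $n$ (finite nonincreasing sequence of positive integers summing to $n$) all of whose parts are powers of $2$ (including $1$); $\mathcal B(n)$ denotes the set of binary partitions of $n$, and $m_\lambda(i)$ the number of parts of $\lambda$ equal to $i$. For $\lambda\in\mathcal B(n)$ let $h_{\mathcal B,\lambda}(x)=\prod_{k\ge0}(1+x^{2^k})^{\lfloor n/2^k\rfloor-m_\lambda(2^k)}$. Let $G_{\mathcal B}(n,x)=\gcd\{h_{\mathcal B,\lambda}(x):\lambda\in\mathcal B(n)\}$ in $\mathbb{Z}[x]$ (normalized with positive leading coefficient), and $$\operatorname{num}_{\mathcal B}(n,x)=\frac{1}{G_{\mathcal B}(n,x)}\sum_{\lambda\in\mathcal B(n)}h_{\mathcal B,\lambda}(x),\qquad \operatorname{den}_{\mathcal B}(n,x)=\frac{\prod_{k\ge0}(1+x^{2^k})^{\lfloor n/2^k\rfloor}}{G_{\mathcal B}(n,x)}.$$ *)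

theory Defs
  imports "HOL-Library.Multiset" "HOL-Computational_Algebra.Polynomial_Factorial"
begin

text \<open>A binary partition of n: a multiset of positive integers, all powers of 2,
  summing to n (the order of parts is irrelevant, so a multiset represents a
  nonincreasing sequence faithfully).\<close>
definition binary_partitions :: "nat \<Rightarrow> nat multiset set" where
  "binary_partitions n = {P. (\<forall>p\<in>#P. \<exists>k. p = 2 ^ k) \<and> sum_mset P = n}"

text \<open>h_{B,lambda}(x) = prod_{k>=0} (1+x^(2^k))^(floor(n/2^k) - m_lambda(2^k)).
  Factors with k > n have exponent 0 (2^k > n), so the product is over k <= n.\<close>
definition hB :: "nat \<Rightarrow> nat multiset \<Rightarrow> int poly" where
  "hB n P = (\<Prod>k\<in>{..n}. (1 + [:0, 1:] ^ (2 ^ k)) ^ (n div 2 ^ k - count P (2 ^ k)))"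

text \<open>G_B(n,x): gcd in Z[x], normalized (positive leading coefficient).\<close>
definition GB :: "nat \<Rightarrow> int poly" where
  "GB n = Gcd (hB n ` binary_partitions n)"

definition numB :: "nat \<Rightarrow> int poly" where
  "numB n = (\<Sum>P\<in>binary_partitions n. hB n P) div GB n"

definition denB :: "nat \<Rightarrow> int poly" where
  "denB n = (\<Prod>k\<in>{..n}. (1 + [:0, 1:] ^ (2 ^ k)) ^ (n div 2 ^ k)) div GB n"

end

theory Submission
  imports Defs
begin

text \<open>
  Write \<open>Phi k = 1 + x ^ 2 ^ k\<close> and evaluate at \<open>cis (pi / 2 ^ s)\<close>, a root of \<open>Phi s\<close>.
  Since \<open>1 + cis (2 * t) = 2 cos t * cis t\<close>, each \<open>hB n P\<close> takes there a real weight
  times a phase, and the phase does not depend on \<open>P\<close> because the exponents \<open>e_k\<close> of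
  \<open>hB n P\<close> satisfy \<open>\<Sum>k. e_k * 2 ^ k = (\<Sum>k. (n div 2 ^ k) * 2 ^ k) - n\<close>. The real factor
  \<open>2 cos (2 ^ k * pi / 2 ^ (s + 1))\<close> is positive for \<open>k < s\<close>, zero for \<open>k = s\<close>, \<open>-2\<close> for
  \<open>k = s + 1\<close> and \<open>2\<close> beyond. So a weight is nonzero only if \<open>P\<close> uses the part \<open>2 ^ s\<close>
  the maximal number \<open>n div 2 ^ s\<close> of times; then \<open>P\<close> has no part \<open>2 ^ (s + 1)\<close> and the
  weight has the sign of \<open>(-1) ^ (n div 2 ^ (s + 1))\<close>. The greedy partition has nonzero
  weight, hence the numerator does not vanish at the root.

  Each \<open>Phi k\<close> is irreducible (Eisenstein at 2 after \<open>x \<mapsto> x + 1\<close>). A prime common factor of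
  all \<open>hB n P\<close> would divide some \<open>Phi j\<close>, and also some \<open>Phi k\<close> with \<open>k \<noteq> j\<close>, taken from the
  partition using \<open>2 ^ j\<close> maximally; so \<open>GB n = 1\<close>, and the denominator is a product of
  powers of irreducibles \<open>Phi k\<close>, \<open>2 ^ k \<le> n\<close>, none of which divides the numerator.
\<close>

lemma binary_partition_part:
  assumes "P \<in> binary_partitions n" "p \<in># P"
  obtains k where "k \<le> n" "p = 2 ^ k" "p \<le> n"
proof -
  obtain k where k: "p = 2 ^ k" using assms unfolding binary_partitions_def by auto
  obtain P' where "P = add_mset p P'" using assms(2) by (metis multi_member_split)
  then have "p \<le> sum_mset P" by simp
  then have "p \<le> n" using assms(1) unfolding binary_partitions_def by simp
  moreover have "k \<le> n" using less_exp[of k] \<open>p \<le> n\<close> k by linarith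
  ultimately show thesis using k that by blast
qed

lemma finite_binary_partitions: "finite (binary_partitions n)"
proof (rule finite_subset)
  show "binary_partitions n \<subseteq> (\<Union>m\<le>n. multisets_of_size {..n} m)"
  proof
    fix P assume P: "P \<in> binary_partitions n"
    have "size P = (\<Sum>p\<in>#P. 1)" by (rule size_eq_sum_mset)
    also have "\<dots> \<le> (\<Sum>p\<in>#P. p)"
      by (rule sum_mset_mono) (use P in \<open>auto simp: binary_partitions_def\<close>)
    also have "\<dots> = n" using P by (simp add: binary_partitions_def)
    finally have "size P \<le> n" .
    moreover have "set_mset P \<subseteq> {..n}" using binary_partition_part[OF P] by auto
    ultimately show "P \<in> (\<Union>m\<le>n. multisets_of_size {..n} m)"
      by (auto simp: multisets_of_size_def)
  qed
qed auto

lemma sum_mset_pow2_parts: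
  assumes "\<forall>p\<in>#P. \<exists>k\<le>n. p = 2 ^ k"
  shows "sum_mset P = (\<Sum>k\<le>n. 2 ^ k * count P (2 ^ k))"
  using assms
proof (induction P)
  case empty
  then show ?case by simp
next
  case (add p P)
  then obtain j where j: "j \<le> n" "p = 2 ^ j" by auto
  have "(\<Sum>k\<le>n. 2 ^ k * count (add_mset p P) (2 ^ k))
      = (\<Sum>k\<le>n. 2 ^ k * count P (2 ^ k) + (if k = j then 2 ^ j else 0))"
    by (intro sum.cong) (auto simp: j)
  also have "\<dots> = (\<Sum>k\<le>n. 2 ^ k * count P (2 ^ k)) + 2 ^ j"
    using j by (simp add: sum.distrib)
  finally show ?case using add j by simp
qed

lemma binary_partition_count_sum:
  assumes "P \<in> binary_partitions n"
  shows "(\<Sum>k\<le>n. 2 ^ k * count P (2 ^ k)) = n"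
proof -
  have "\<forall>p\<in>#P. \<exists>k\<le>n. p = 2 ^ k" using binary_partition_part[OF assms] by metis
  then show ?thesis using sum_mset_pow2_parts assms by (simp add: binary_partitions_def)
qed

lemma binary_partition_count_le:
  assumes "P \<in> binary_partitions n" "k \<le> n"
  shows "count P (2 ^ k) \<le> n div 2 ^ k"
proof -
  have "2 ^ k * count P (2 ^ k) \<le> (\<Sum>k\<le>n. 2 ^ k * count P (2 ^ k))"
    by (rule member_le_sum) (use assms in auto)
  then have "count P (2 ^ k) * 2 ^ k \<le> n"
    using binary_partition_count_sum[OF assms(1)] by (simp add: mult.commute)
  then show ?thesis by (simp add: less_eq_div_iff_mult_less_eq)
qed

lemma binary_partition_max_count:
  assumes "P \<in> binary_partitions n" "2 ^ s \<le> n" "count P (2 ^ s) = n div 2 ^ s"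
  shows "count P (2 ^ Suc s) = 0"
proof -
  have s: "s < n" "Suc s \<le> n"
    using assms(2) less_exp[of s] by linarith+
  have "(\<Sum>k\<in>{s, Suc s}. 2 ^ k * count P (2 ^ k)) \<le> (\<Sum>k\<le>n. 2 ^ k * count P (2 ^ k))"
    by (rule sum_mono2) (use s in auto)
  then have "2 ^ s * (n div 2 ^ s) + 2 ^ Suc s * count P (2 ^ Suc s) \<le> n"
    using binary_partition_count_sum[OF assms(1)] assms(3) by simp
  moreover have "n = 2 ^ s * (n div 2 ^ s) + n mod 2 ^ s" "n mod 2 ^ s < 2 ^ s" by simp_all
  ultimately have "2 ^ Suc s * count P (2 ^ Suc s) < 2 ^ s" by linarith
  then show ?thesis by (cases "count P (2 ^ Suc s)") auto
qed

definition greedy_partition :: "nat \<Rightarrow> nat \<Rightarrow> nat multiset" where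
  "greedy_partition n s = replicate_mset (n div 2 ^ s) (2 ^ s) + replicate_mset (n mod 2 ^ s) 1"

lemma greedy_partition_in_binary_partitions: "greedy_partition n s \<in> binary_partitions n"
  unfolding greedy_partition_def binary_partitions_def
  by (auto intro: exI[of _ 0] simp: mult.commute)

lemma count_greedy_partition: "count (greedy_partition n s) (2 ^ s) = n div 2 ^ s"
  unfolding greedy_partition_def by (cases "s = 0") auto

lemma eisenstein_lower_coeff:
  fixes g h :: "'a :: idom poly"
  assumes p: "prime_elem p" and g: "\<not> p dvd lead_coeff g" and h: "\<not> p dvd coeff h 0" "degree h > 0"
  shows "\<exists>i < degree (g * h). \<not> p dvd coeff (g * h) i"
proof -
  have "g \<noteq> 0" "h \<noteq> 0" using g h by auto
  define i where "i = (LEAST i. \<not> p dvd coeff g i)"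
  have gi: "\<not> p dvd coeff g i" unfolding i_def by (rule LeastI[of _ "degree g"]) (rule g)
  have "i \<le> degree g" unfolding i_def by (rule Least_le) (rule g)
  then have "i < degree (g * h)" using h(2) \<open>g \<noteq> 0\<close> \<open>h \<noteq> 0\<close> by (simp add: degree_mult_eq)
  have below: "p dvd (\<Sum>j<i. coeff g j * coeff h (i - j))"
    by (intro dvd_sum dvd_mult2) (use not_less_Least in \<open>auto simp: i_def\<close>)
  have "coeff (g * h) i = (\<Sum>j<i. coeff g j * coeff h (i - j)) + coeff g i * coeff h 0"
    by (simp add: coeff_mult lessThan_Suc_atMost[symmetric])
  moreover have "\<not> p dvd coeff g i * coeff h 0" using p gi h(1) by (simp add: prime_elem_dvd_mult_iff)
  ultimately have "\<not> p dvd coeff (g * h) i" using below by (simp add: dvd_add_right_iff)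
  with \<open>i < degree (g * h)\<close> show ?thesis by blast
qed

lemma eisenstein_criterion:
  fixes g h :: "'a :: idom poly"
  assumes p: "prime_elem p"
    and lead: "\<not> p dvd lead_coeff (g * h)"
    and coeffs: "\<And>i. i < degree (g * h) \<Longrightarrow> p dvd coeff (g * h) i"
    and const: "\<not> p ^ 2 dvd coeff (g * h) 0"
  shows "degree g = 0 \<or> degree h = 0"
proof (rule ccontr)
  assume "\<not> (degree g = 0 \<or> degree h = 0)"
  then have deg: "degree g > 0" "degree h > 0" by auto
  have lead_g: "\<not> p dvd lead_coeff g" and lead_h: "\<not> p dvd lead_coeff h"
    using lead by (auto simp: lead_coeff_mult)
  have "\<not> (p dvd coeff g 0 \<and> p dvd coeff h 0)"
    using const by (auto simp: coeff_mult_0 power2_eq_square intro: mult_dvd_mono)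
  then consider "\<not> p dvd coeff h 0" | "\<not> p dvd coeff g 0" by blast
  then show False
  proof cases
    case 1
    then show False using eisenstein_lower_coeff[OF p lead_g 1 deg(2)] coeffs by blast
  next
    case 2
    then show False using eisenstein_lower_coeff[OF p lead_h 2 deg(1)] coeffs by (auto simp: mult.commute)
  qed
qed

lemma one_add_power_two_power_mod_2:
  fixes y :: "'a :: comm_ring_1"
  shows "\<exists>g. (1 + y) ^ (2 ^ k) = 1 + y ^ (2 ^ k) + 2 * g"
proof (induction k)
  case 0
  show ?case by (intro exI[of _ 0]) simp
next
  case (Suc k)
  then obtain g where g: "(1 + y) ^ (2 ^ k) = 1 + y ^ (2 ^ k) + 2 * g" by blast
  let ?a = "y ^ (2 ^ k)"
  have "(1 + y) ^ (2 ^ Suc k) = ((1 + y) ^ (2 ^ k)) ^ 2"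
    by (simp add: power_mult[symmetric] mult.commute)
  also have "\<dots> = 1 + ?a ^ 2 + 2 * (?a + 2 * g * (1 + ?a + g))"
    unfolding g by (simp add: algebra_simps power2_eq_square)
  also have "?a ^ 2 = y ^ (2 ^ Suc k)"
    by (simp add: power_mult[symmetric] mult.commute)
  finally show ?case by blast
qed

lemma pcompose_power: "pcompose (p ^ n) r = pcompose p r ^ n"
  by (induction n) (simp_all add: pcompose_1 pcompose_mult)

lemma pcompose_X: "pcompose [:0, 1:] r = (r :: 'a :: comm_semiring_1 poly)"
  by (simp add: pcompose_pCons smult_1_left)

text \<open>\<open>Phi k\<close> is the cyclotomic polynomial of order \<open>2 ^ (k + 1)\<close>.\<close>
abbreviation Phi :: "nat \<Rightarrow> int poly" where
  "Phi k \<equiv> 1 + [:0, 1:] ^ (2 ^ k)"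

lemma degree_Phi: "degree (Phi k) = 2 ^ k"
  using degree_linear_power[of "0::int" "2 ^ k"] by (simp add: degree_add_eq_right)

lemma Phi_nonzero: "Phi k \<noteq> 0"
  using degree_Phi[of k] by (metis degree_0 power_not_zero zero_neq_numeral)

lemma coeff_0_Phi: "coeff (Phi k) 0 = 1"
  using coeff_linear_poly_power[of 0 "2 ^ k" "0::int" 1] by simp

lemma Phi_shift_eisenstein:
  fixes k :: nat
  defines "f \<equiv> pcompose (Phi k) [:1, 1:]"
  shows "degree f = 2 ^ k" "lead_coeff f = 1" "coeff f 0 = 2"
    and "\<And>i. i < 2 ^ k \<Longrightarrow> even (coeff f i)"
proof -
  have f: "f = 1 + [:1, 1:] ^ (2 ^ k)"
    unfolding f_def by (simp add: pcompose_add pcompose_1 pcompose_power pcompose_X)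
  show deg: "degree f = 2 ^ k" unfolding f_def by (simp add: degree_pcompose degree_Phi)
  show "lead_coeff f = 1"
    unfolding deg using coeff_linear_poly_power[of "2 ^ k" "2 ^ k" "1::int" 1] by (simp add: f)
  show "coeff f 0 = 2"
    using coeff_linear_poly_power[of 0 "2 ^ k" "1::int" 1] by (simp add: f)
  obtain g where "[:1, 1:] ^ (2 ^ k) = Phi k + 2 * (g :: int poly)"
    using one_add_power_two_power_mod_2[of "[:0, 1:] :: int poly" k] by (auto simp: one_pCons)
  then have f_mod_2: "f = [:0, 1:] ^ (2 ^ k) + 2 * (1 + g)" by (simp add: f algebra_simps)
  show "even (coeff f i)" if "i < 2 ^ k" for i
    unfolding f_mod_2 using that coeff_linear_poly_power[of i "2 ^ k" "0::int" 1]
    by (simp add: numeral_mult_conv_smult)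
qed

lemma irreducible_Phi: "irreducible (Phi k)"
proof (rule irreducibleI)
  show "Phi k \<noteq> 0" "\<not> is_unit (Phi k)"
    using degree_Phi[of k] by (auto simp: is_unit_poly_iff)
next
  fix a b assume ab: "Phi k = a * b"
  let ?shift = "\<lambda>p. pcompose p [:1, 1 :: int:]"
  have "?shift a * ?shift b = pcompose (Phi k) [:1, 1:]" by (simp add: ab pcompose_mult)
  then have "degree (?shift a) = 0 \<or> degree (?shift b) = 0"
    using Phi_shift_eisenstein[where k = k]
    by (intro eisenstein_criterion[of 2]) (auto simp: prime_imp_prime_elem)
  then have "degree a = 0 \<or> degree b = 0" by (simp add: degree_pcompose)
  moreover have "coeff a 0 * coeff b 0 = 1" using coeff_0_Phi[of k] by (simp add: ab coeff_mult_0)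
  then have "coeff a 0 dvd 1" "coeff b 0 dvd 1" by (metis dvd_triv_left dvd_triv_right)+
  moreover have "is_unit p" if "degree p = 0" "coeff p 0 dvd 1" for p :: "int poly"
    using that degree_0_id[of p] is_unit_const_poly_iff[of "coeff p 0"] by simp
  ultimately show "is_unit a \<or> is_unit b" by blast
qed

lemma Phi_common_factor:
  assumes "p dvd Phi j" "p dvd Phi k" "\<not> is_unit p"
  shows "j = k"
proof -
  have "Phi j dvd p" "Phi k dvd p" using assms irreducibleD'[OF irreducible_Phi] by blast+
  then have "Phi j dvd Phi k" "Phi k dvd Phi j" using assms dvd_trans by blast+
  then have "degree (Phi j) = degree (Phi k)" by (simp add: dvd_imp_degree_le Phi_nonzero le_antisym)
  then show ?thesis by (simp add: degree_Phi)
qed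

definition hB_exp :: "nat \<Rightarrow> nat multiset \<Rightarrow> nat \<Rightarrow> nat" where
  "hB_exp n P k = n div 2 ^ k - count P (2 ^ k)"

lemma hB_eq: "hB n P = (\<Prod>k\<le>n. Phi k ^ hB_exp n P k)"
  by (simp add: hB_def hB_exp_def)

lemma hB_nonzero: "hB n P \<noteq> 0"
  by (simp add: hB_eq Phi_nonzero)

lemma weighted_sum_hB_exp:
  assumes "P \<in> binary_partitions n"
  shows "(\<Sum>k\<le>n. hB_exp n P k * 2 ^ k) = (\<Sum>k\<le>n. n div 2 ^ k * 2 ^ k) - n"
proof -
  have "(\<Sum>k\<le>n. hB_exp n P k * 2 ^ k) + (\<Sum>k\<le>n. 2 ^ k * count P (2 ^ k))
      = (\<Sum>k\<le>n. n div 2 ^ k * 2 ^ k)"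
    unfolding sum.distrib[symmetric]
  proof (rule sum.cong)
    fix k assume "k \<in> {..n}"
    then have "count P (2 ^ k) \<le> n div 2 ^ k" using binary_partition_count_le[OF assms] by simp
    then show "hB_exp n P k * 2 ^ k + 2 ^ k * count P (2 ^ k) = n div 2 ^ k * 2 ^ k"
      by (simp add: hB_exp_def algebra_simps)
  qed simp
  then show ?thesis using binary_partition_count_sum[OF assms] by simp
qed

lemma prime_factor_hB:
  assumes "prime p" "p dvd hB n P"
  obtains k where "hB_exp n P k > 0" "p dvd Phi k"
proof -
  obtain k where k: "p dvd Phi k ^ hB_exp n P k"
    using assms by (auto simp: hB_eq prime_dvd_prod_iff)
  then have "hB_exp n P k > 0" using assms(1) by (metis gr0I power_0 not_prime_unit)
  with k show thesis using that prime_dvd_power assms(1) by blast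
qed

lemma GB_eq_1: "GB n = 1"
proof -
  have dvd_hB: "GB n dvd hB n P" if "P \<in> binary_partitions n" for P
    unfolding GB_def using that by (intro Gcd_dvd) auto
  have "is_unit (GB n)"
  proof (rule ccontr)
    assume "\<not> is_unit (GB n)"
    moreover have "GB n \<noteq> 0"
      using dvd_hB[OF greedy_partition_in_binary_partitions] hB_nonzero by force
    ultimately obtain p where p: "prime p" "p dvd GB n" using prime_divisor_exists by blast
    have "p dvd hB n (greedy_partition n s)" for s
      using p(2) dvd_hB[OF greedy_partition_in_binary_partitions] by (rule dvd_trans)
    then obtain j k where "p dvd Phi j" "p dvd Phi k" "hB_exp n (greedy_partition n j) k > 0"
      by (metis p(1) prime_factor_hB)
    moreover have "hB_exp n (greedy_partition n j) j = 0"
      by (simp add: hB_exp_def count_greedy_partition)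
    ultimately show False using Phi_common_factor p(1) not_prime_unit by (metis less_irrefl)
  qed
  then show ?thesis unfolding GB_def by (metis is_unit_normalize normalize_Gcd)
qed

lemma map_poly_of_int_add:
  "map_poly (of_int :: int \<Rightarrow> 'a :: comm_ring_1) (p + q) = map_poly of_int p + map_poly of_int q"
  by (rule poly_eqI) (simp add: coeff_map_poly)

lemma map_poly_of_int_mult:
  "map_poly (of_int :: int \<Rightarrow> 'a :: comm_ring_1) (p * q) = map_poly of_int p * map_poly of_int q"
  by (rule poly_eqI) (simp add: coeff_map_poly coeff_mult)

lemma map_poly_of_int_power:
  "map_poly (of_int :: int \<Rightarrow> 'a :: comm_ring_1) (p ^ n) = map_poly of_int p ^ n"
  by (induction n) (simp_all add: map_poly_of_int_mult)

lemma map_poly_of_int_prod: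
  "map_poly (of_int :: int \<Rightarrow> 'a :: comm_ring_1) (\<Prod>i\<in>A. f i) = (\<Prod>i\<in>A. map_poly of_int (f i))"
  by (induction A rule: infinite_finite_induct) (simp_all add: map_poly_of_int_mult)

lemma map_poly_of_int_sum:
  "map_poly (of_int :: int \<Rightarrow> 'a :: comm_ring_1) (\<Sum>i\<in>A. f i) = (\<Sum>i\<in>A. map_poly of_int (f i))"
  by (induction A rule: infinite_finite_induct) (simp_all add: map_poly_of_int_add)

lemma map_poly_of_int_X: "map_poly (of_int :: int \<Rightarrow> 'a :: comm_ring_1) [:0, 1:] = [:0, 1:]"
  by (simp add: map_poly_pCons)

lemma prod_rcis: "(\<Prod>i\<in>A. rcis (r i) (a i)) = rcis (\<Prod>i\<in>A. r i) (\<Sum>i\<in>A. a i)"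
  by (induction A rule: infinite_finite_induct) (simp_all add: rcis_mult)

lemma sum_rcis: "(\<Sum>i\<in>A. rcis (r i) a) = rcis (\<Sum>i\<in>A. r i) a"
  by (simp add: rcis_def sum_distrib_right)

lemma one_add_cis_double: "1 + cis (2 * t) = rcis (2 * cos t) t"
  using cos_double_cos[of t] sin_double[of t] unfolding complex_eq_iff rcis_def
  by (simp add: power2_eq_square algebra_simps)

lemma poly_Phi_cis: "poly (map_poly of_int (Phi k)) (cis (2 * t)) = rcis (2 * cos (2 ^ k * t)) (2 ^ k * t)"
proof -
  have "poly (map_poly of_int (Phi k)) (cis (2 * t)) = 1 + cis (2 * (2 ^ k * t))"
    by (simp add: map_poly_of_int_add map_poly_of_int_power map_poly_of_int_X DeMoivre mult_ac)
  then show ?thesis by (simp only: one_add_cis_double)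
qed

lemma poly_hB_cis:
  assumes "P \<in> binary_partitions n"
  shows "poly (map_poly of_int (hB n P)) (cis (2 * t))
    = rcis (\<Prod>k\<le>n. (2 * cos (2 ^ k * t)) ^ hB_exp n P k) (real ((\<Sum>k\<le>n. n div 2 ^ k * 2 ^ k) - n) * t)"
proof -
  have "poly (map_poly of_int (hB n P)) (cis (2 * t))
      = (\<Prod>k\<le>n. rcis ((2 * cos (2 ^ k * t)) ^ hB_exp n P k) (real (hB_exp n P k * 2 ^ k) * t))"
    unfolding hB_eq map_poly_of_int_prod map_poly_of_int_power poly_prod poly_power
      poly_Phi_cis DeMoivre2
    by (simp add: mult_ac)
  also have "\<dots> = rcis (\<Prod>k\<le>n. (2 * cos (2 ^ k * t)) ^ hB_exp n P k)
      (real (\<Sum>k\<le>n. hB_exp n P k * 2 ^ k) * t)"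
    by (simp add: prod_rcis sum_distrib_right)
  finally show ?thesis by (simp only: weighted_sum_hB_exp[OF assms])
qed

lemma cos_dyadic_pi_pos:
  assumes "k < s"
  shows "cos (2 ^ k * (pi / 2 ^ Suc s)) > 0"
proof (rule cos_gt_zero_pi)
  have "(2::real) ^ k < 2 ^ s" using assms by simp
  then have "2 ^ k * (pi / 2 ^ Suc s) < 2 ^ s * (pi / 2 ^ Suc s)"
    by (intro mult_strict_right_mono) auto
  then show "2 ^ k * (pi / 2 ^ Suc s) < pi / 2" by simp
  have "0 < 2 ^ k * (pi / 2 ^ Suc s)" by (simp add: pi_gt_zero)
  then show "- (pi / 2) < 2 ^ k * (pi / 2 ^ Suc s)" using pi_gt_zero by linarith
qed

lemma cos_dyadic_pi_multiple:
  assumes "Suc s \<le> k"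
  shows "cos (2 ^ k * (pi / 2 ^ Suc s)) = (if k = Suc s then -1 else 1)"
proof -
  obtain j where k: "k = Suc s + j" using assms le_Suc_ex by blast
  have "2 ^ k * (pi / 2 ^ Suc s) = real (2 ^ j) * pi" by (simp add: k power_add)
  then have "cos (2 ^ k * (pi / 2 ^ Suc s)) = (-1) ^ (2 ^ j)" by (simp only: cos_npi)
  then show ?thesis by (cases j) (simp_all add: k)
qed

definition partition_weight :: "nat \<Rightarrow> nat \<Rightarrow> nat multiset \<Rightarrow> real" where
  "partition_weight s n P = (\<Prod>k\<le>n. (2 * cos (2 ^ k * (pi / 2 ^ Suc s))) ^ hB_exp n P k)"

lemma partition_weight_eq_0:
  assumes "P \<in> binary_partitions n" "s \<le> n" "count P (2 ^ s) \<noteq> n div 2 ^ s"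
  shows "partition_weight s n P = 0"
proof -
  have "hB_exp n P s > 0"
    using binary_partition_count_le[OF assms(1,2)] assms(3) by (simp add: hB_exp_def)
  then show ?thesis
    unfolding partition_weight_def using assms(2) by (intro prod_zero) (auto intro!: bexI[of _ s])
qed

lemma partition_weight_sign:
  assumes P: "P \<in> binary_partitions n" and "2 ^ s \<le> n" "count P (2 ^ s) = n div 2 ^ s"
  shows "(-1) ^ (n div 2 ^ Suc s) * partition_weight s n P > 0"
proof -
  let ?a = "\<lambda>k. 2 * cos (2 ^ k * (pi / 2 ^ Suc s))"
  have "Suc s \<le> n" using assms(2) less_exp[of s] by linarith
  have "hB_exp n P (Suc s) = n div 2 ^ Suc s"
    using binary_partition_max_count[OF assms] by (simp add: hB_exp_def)
  moreover have "?a (Suc s) = -2" by (simp add: cos_dyadic_pi_multiple)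
  ultimately have split: "partition_weight s n P
      = (-2) ^ (n div 2 ^ Suc s) * (\<Prod>k\<in>{..n} - {Suc s}. ?a k ^ hB_exp n P k)"
    unfolding partition_weight_def using \<open>Suc s \<le> n\<close> by (subst prod.remove[of _ "Suc s"]) auto
  have sign: "(-1::real) ^ m * (-2) ^ m = 2 ^ m" for m :: nat
    unfolding power_mult_distrib[symmetric] by simp
  have weight: "(-1) ^ (n div 2 ^ Suc s) * partition_weight s n P
      = 2 ^ (n div 2 ^ Suc s) * (\<Prod>k\<in>{..n} - {Suc s}. ?a k ^ hB_exp n P k)"
    unfolding split mult.assoc[symmetric] sign ..
  have "?a k ^ hB_exp n P k > 0" if "k \<noteq> Suc s" for k
  proof -
    consider "k < s" | "k = s" | "Suc s < k" using \<open>k \<noteq> Suc s\<close> by linarith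
    then show ?thesis
    proof cases
      case 1
      then show ?thesis using cos_dyadic_pi_pos by simp
    next
      case 2
      then show ?thesis using assms(3) by (simp add: hB_exp_def)
    next
      case 3
      then show ?thesis using cos_dyadic_pi_multiple[of s k] by simp
    qed
  qed
  then have "(\<Prod>k\<in>{..n} - {Suc s}. ?a k ^ hB_exp n P k) > 0" by (intro prod_pos) auto
  then show ?thesis unfolding weight by simp
qed

lemma sum_partition_weight_nonzero:
  assumes "2 ^ s \<le> n"
  shows "(\<Sum>P\<in>binary_partitions n. partition_weight s n P) \<noteq> 0"
proof -
  let ?\<sigma> = "(-1::real) ^ (n div 2 ^ Suc s)"
  have "s \<le> n" using assms less_exp[of s] by linarith
  have nonneg: "?\<sigma> * partition_weight s n P \<ge> 0" if "P \<in> binary_partitions n" for P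
    using partition_weight_sign[OF that assms] partition_weight_eq_0[OF that \<open>s \<le> n\<close>]
    by (cases "count P (2 ^ s) = n div 2 ^ s") auto
  have "0 < ?\<sigma> * partition_weight s n (greedy_partition n s)"
    by (rule partition_weight_sign[OF greedy_partition_in_binary_partitions assms
          count_greedy_partition])
  also have "\<dots> \<le> (\<Sum>P\<in>binary_partitions n. ?\<sigma> * partition_weight s n P)"
    using nonneg finite_binary_partitions greedy_partition_in_binary_partitions
    by (intro member_le_sum) auto
  finally show ?thesis by (auto simp: sum_distrib_left[symmetric])
qed

lemma Phi_not_dvd_sum_hB:
  assumes "2 ^ s \<le> n"
  shows "\<not> Phi s dvd (\<Sum>P\<in>binary_partitions n. hB n P)"
proof
  let ?t = "pi / 2 ^ Suc s"
  let ?eval = "\<lambda>p. poly (map_poly of_int p) (cis (2 * ?t))"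
  assume "Phi s dvd (\<Sum>P\<in>binary_partitions n. hB n P)"
  then obtain q where q: "(\<Sum>P\<in>binary_partitions n. hB n P) = Phi s * q" by (elim dvdE)
  have "?eval (Phi s) = 0" unfolding poly_Phi_cis by simp
  then have "?eval (\<Sum>P\<in>binary_partitions n. hB n P) = 0"
    by (simp add: q map_poly_of_int_mult)
  moreover have "?eval (\<Sum>P\<in>binary_partitions n. hB n P)
      = rcis (\<Sum>P\<in>binary_partitions n. partition_weight s n P)
          (real ((\<Sum>k\<le>n. n div 2 ^ k * 2 ^ k) - n) * ?t)"
    unfolding map_poly_of_int_sum poly_sum sum_rcis[symmetric] partition_weight_def
    by (intro sum.cong) (simp_all only: poly_hB_cis)
  ultimately show False using sum_partition_weight_nonzero[OF assms] by simp
qed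

lemma numB_eq: "numB n = (\<Sum>P\<in>binary_partitions n. hB n P)"
  by (simp add: numB_def GB_eq_1)

lemma denB_eq: "denB n = (\<Prod>k\<le>n. Phi k ^ (n div 2 ^ k))"
  by (simp add: denB_def GB_eq_1)

theorem theorem2:
  shows "(\<forall>n s::nat. 2 \<le> n \<longrightarrow> 2 ^ s \<le> n \<longrightarrow>
            \<not> (1 + [:0, 1:] ^ (2 ^ s)) dvd numB n)
       \<and> (\<forall>n::nat. 1 \<le> n \<longrightarrow> gcd (numB n) (denB n) = 1)"
proof (intro conjI allI impI)
  fix n s :: nat
  assume "2 ^ s \<le> n"
  then show "\<not> Phi s dvd numB n" by (simp add: numB_eq Phi_not_dvd_sum_hB)
next
  fix n :: nat
  have "coprime (numB n) (Phi k ^ (n div 2 ^ k))" for k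
  proof (cases "2 ^ k \<le> n")
    case True
    then have "coprime (Phi k) (numB n)"
      by (intro prime_elem_imp_coprime irreducible_imp_prime_elem irreducible_Phi)
        (simp add: numB_eq Phi_not_dvd_sum_hB)
    then show ?thesis by (simp add: coprime_commute)
  qed simp
  then show "gcd (numB n) (denB n) = 1"
    by (simp add: denB_eq prod_coprime_right coprime_iff_gcd_eq_1[symmetric])
qed

end
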